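(* Let $\Sigma(s,t)$ (positive definite), $A_s(s,t),A_t(s,t)$, and symmetric $S_s(s,t),S_t(s,t)$, $(s,t)\in[0,1]^2$, be $n\times n$ matrix-valued functions satisfying, with $J=\sqrt{\mathrm{tr}(\Sigma A_s^{\mathsf{T}}A_s)\, \mathrm{tr}(\Sigma A_t^{\mathsf{T}} A_t)-[\tfrac{1}{2}\mathrm{tr}(\Sigma(A_s^{\mathsf{T}}A_t+A_t^{\mathsf{T}}A_s))]^2}$, $$J^{-1}\Big(A_s\, \mathrm{tr}(\Sigma A_t^{\mathsf{T}}A_t)-\tfrac{1}{2}A_t\, \mathrm{tr}(\Sigma (A_s^{\mathsf{T}}A_t+A_t^{\mathsf{T}}A_s))\Big)=2S_s,\qquad J^{-1}\Big(A_t\, \mathrm{tr}(\Sigma A_s^{\mathsf{T}}A_s)-\tfrac{1}{2}A_s\, \mathrm{tr}(\Sigma (A_s^{\mathsf{T}}A_t+A_t^{\mathsf{T}}A_s))\Big)=2S_t,$$ $$\partial_s S_s+\partial_t S_t+\tfrac{1}{2}J^{-1}\Big\{A_s^{\mathsf{T}}A_s\, \mathrm{tr}(\Sigma A_t^{\mathsf{T}}A_t)+A_t^{\mathsf{T}}A_t\,\mathrm{tr}(\Sigma A_s^{\mathsf{T}}A_s)-\tfrac{1}{2}(A_s^{\mathsf{T}}A_t+A_t^{\mathsf{T}}A_s)\,\mathrm{tr}(\Sigma (A_s^{\mathsf{T}}A_t+A_t^{\mathsf{T}}A_s))\Big\}=0,$$ $$\partial_s\Sigma=\Sigma A_s^{\mathsf{T}}+A_s\Sigma,\qquad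 \partial_t\Sigma=\Sigma A_t^{\mathsf{T}}+A_t\Sigma.$$ Define $\rho(s,t,x)=(2\pi)^{-n/2}\det(\Sigma(s,t))^{-1/2}e^{-\frac12 x^{\mathsf{T}}\Sigma(s,t)^{-1}x}$, $v_s(s,t,x)=A_s(s,t)x$, $v_t(s,t,x)=A_t(s,t)x$, $\Phi_s(s,t,x)=x^{\mathsf{T}}S_s(s,t)x$, $\Phi_t(s,t,x)=x^{\mathsf{T}}S_t(s,t)x$. Then, with $A=\sqrt{\int \|v_s\|^2\rho\, dx\int\|v_t\|^2\rho\, dx-(\int v_s\cdot v_t\,\rho\, dx)^2}$, the tuple $(\rho,v_s,v_t,\Phi_s,\Phi_t)$ solves the system $$A^{-1}\Big[v_s\int \|v_t\|^2\rho\,dx-v_t\int v_s\cdot v_t\,\rho\,dx\Big]=\nabla\Phi_s,\qquad A^{-1}\Big[v_t\int \|v_s\|^2\rho\,dx-v_s\int v_s\cdot v_t\,\rho\,dx\Big]=\nabla\Phi_t,$$ $$\partial_s\Phi_s+\partial_t\Phi_t+A^{-1}\Big[\tfrac{1}{2}\|v_s\|^2\int \|v_t\|^2\rho\,dx +\tfrac{1}{2}\|v_t\|^2\int\|v_s\|^2\rho\,dx - (v_t\cdot v_s)\int v_t\cdot v_s\,\rho\, dx\Big]=0,$$ $$\partial_s\rho+\nabla\cdot (\rho v_s)=0,\qquad \partial_t\rho+\nabla\cdot (\rho v_t)=0.$$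
   Context: All integrals are over $\mathbb{R}^n$; $\nabla$ and $\nabla\cdot$ act in $x$. *)

theory Defs
  imports "HOL-Analysis.Analysis"
begin

definition pos_def_mat :: "real^'n^'n \<Rightarrow> bool" where
  "pos_def_mat M \<longleftrightarrow> transpose M = M \<and> (\<forall>x. x \<noteq> 0 \<longrightarrow> 0 < x \<bullet> (M *v x))"

definition gauss_density :: "real^'n^'n \<Rightarrow> real^'n \<Rightarrow> real" where
  "gauss_density S x =
     (2 * pi) powr (- real CARD('n) / 2) * det S powr (- 1 / 2)
     * exp (- (1 / 2) * (x \<bullet> (matrix_inv S *v x)))"

text \<open>Divergence (trace) of a linear map on R^n, applied to the Frechet derivative of a vector field.\<close>
definition div_lin :: "(real^'n \<Rightarrow> real^'n) \<Rightarrow> real" where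
  "div_lin L = (\<Sum>i\<in>UNIV. L (axis i 1) $ i)"

end

(*
  Everything is explicit for a centred Gaussian rho with covariance Sigma and total mass m.
  Completing the square gives the moment generating function
    int exp (tau u.x) rho dx = m exp (tau^2 u.Sigma u / 2),
  and since (cosh (tau y) - 1) / tau^2 tends to y^2 / 2 from above, with an error of order tau^2,
  its expansion in tau yields the second moments  int (Ax).(Bx) rho dx = m tr (Sigma A^T B).
  Hence the integrals of the system are m times the traces in the hypotheses, A = m J, and m
  cancels: the potential equations and the Hamilton-Jacobi equation are the matrix hypotheses
  evaluated at x. The continuity equations follow from Jacobi's formula
  d (det Sigma) = det Sigma tr (Sigma^-1 d Sigma), from d (Sigma^-1) = - Sigma^-1 (d Sigma) Sigma^-1,
  and from d Sigma = Sigma A^T + A Sigma.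
*)
theory Submission
  imports Defs "HOL-Probability.Probability" "HOL-Real_Asymp.Real_Asymp"
begin

lemma matrix_inv_right:
  assumes "invertible (A :: 'a::semiring_1^'n^'m)"
  shows "A ** matrix_inv A = mat 1"
  using someI_ex[OF assms[unfolded invertible_def]] unfolding matrix_inv_def by blast

lemma matrix_inv_left:
  assumes "invertible (A :: 'a::semiring_1^'n^'m)"
  shows "matrix_inv A ** A = mat 1"
  using someI_ex[OF assms[unfolded invertible_def]] unfolding matrix_inv_def by blast

lemma matrix_inv_mult_vector_cancel:
  fixes A :: "'a::comm_semiring_1^'n^'m"
  assumes "invertible A"
  shows "matrix_inv A *v (A *v x) = x" and "A *v (matrix_inv A *v y) = y"
  by (simp_all add: matrix_vector_mul_assoc matrix_inv_left matrix_inv_right assms)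

lemma transpose_matrix_inv_symmetric:
  fixes S :: "real^'n^'n"
  assumes "invertible S" and "transpose S = S"
  shows "transpose (matrix_inv S) = matrix_inv S"
proof -
  have "transpose (matrix_inv S) ** S = mat 1"
    by (metis assms matrix_inv_right matrix_transpose_mul transpose_mat)
  then show ?thesis
    by (metis assms(1) matrix_inv_right matrix_mul_assoc matrix_mul_lid matrix_mul_rid)
qed

lemma matrix_diff_ldistrib: "(A::'a::ring_1^'n^'m) ** (B - C) = A ** B - A ** C"
  by (simp add: matrix_matrix_mult_def vec_eq_iff sum_subtractf right_diff_distrib)

lemma matrix_diff_rdistrib: "((A::'a::ring_1^'n^'m) - B) ** C = A ** C - B ** C"
  by (simp add: matrix_matrix_mult_def vec_eq_iff sum_subtractf left_diff_distrib)

lemma matrix_vector_mult_uminus: "(- A) *v x = - ((A::'a::ring_1^'n^'m) *v x)"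
  by (simp add: matrix_vector_mult_def vec_eq_iff sum_negf)

lemma inner_matrix_vector_transpose: "((A::real^'n^'m) *v x) \<bullet> y = x \<bullet> (transpose A *v y)"
  by (metis dot_lmul_matrix inner_commute transpose_matrix_vector)

lemma symmetric_matrix_inner: "transpose A = A \<Longrightarrow> ((A::real^'n^'n) *v x) \<bullet> y = x \<bullet> (A *v y)"
  by (metis inner_matrix_vector_transpose)

lemma trace_scaleR: "trace (c *\<^sub>R (A::real^'n^'n)) = c * trace A"
  by (simp add: trace_def sum_distrib_left)

lemma trace_transpose: "trace (transpose (A::'a::comm_semiring_1^'n^'n)) = trace A"
  by (simp add: trace_def transpose_def)

lemma trace_sandwich_eq_sum:
  fixes S A B :: "real^'n^'n"
  shows "trace (S ** (transpose A ** B)) = (\<Sum>i\<in>UNIV. B $ i \<bullet> (S *v A $ i))"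
proof -
  have column: "(S ** transpose A) $ k $ i = (S *v A $ i) $ k" for k i
    by (simp add: matrix_matrix_mult_def matrix_vector_mult_def transpose_def)
  have "trace (S ** (transpose A ** B)) = trace (B ** (S ** transpose A))"
    by (metis matrix_mul_assoc trace_mul_sym)
  also have "\<dots> = (\<Sum>i\<in>UNIV. B $ i \<bullet> (S *v A $ i))"
    by (simp only: trace_def matrix_matrix_mult_def[of B] vec_lambda_beta column inner_vec_def
        inner_real_def)
  finally show ?thesis .
qed

lemma trace_sandwich_swap:
  fixes S A B :: "real^'n^'n"
  assumes "transpose S = S"
  shows "trace (S ** (transpose A ** B)) = trace (S ** (transpose B ** A))"
  using symmetric_matrix_inner[OF assms] by (simp add: trace_sandwich_eq_sum inner_commute)

section \<open>Continuity and derivatives of determinant and inverse\<close>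

lemma has_derivative_matrix_entry: "((\<lambda>A::real^'n^'m. A $ i $ j) has_derivative (\<lambda>H. H $ i $ j)) F"
  using bounded_linear_compose[OF bounded_linear_vec_nth[of j] bounded_linear_vec_nth[of i]]
  by (rule bounded_linear_imp_has_derivative)

lemma has_derivative_matrix_vector_mult: "((\<lambda>y. (A::real^'n^'m) *v y) has_derivative (\<lambda>h. A *v h)) F"
  by (rule bounded_linear_imp_has_derivative[OF matrix_vector_mul_bounded_linear])

lemma tendsto_det [tendsto_intros]:
  fixes F :: "'a \<Rightarrow> real^'n^'n"
  assumes "(F \<longlongrightarrow> A) net"
  shows "((\<lambda>x. det (F x)) \<longlongrightarrow> det A) net"
  unfolding det_def by (intro tendsto_intros assms)

lemma continuous_on_det [continuous_intros]:
  fixes F :: "'a::topological_space \<Rightarrow> real^'n^'n"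
  shows "continuous_on T F \<Longrightarrow> continuous_on T (\<lambda>x. det (F x))"
  unfolding continuous_on_def by (blast intro: tendsto_det)

lemma tendsto_matrix_mult [tendsto_intros]:
  fixes F :: "'a \<Rightarrow> real^'n^'m" and G :: "'a \<Rightarrow> real^'k^'n"
  assumes "(F \<longlongrightarrow> A) net" and "(G \<longlongrightarrow> B) net"
  shows "((\<lambda>x. F x ** G x) \<longlongrightarrow> A ** B) net"
  unfolding matrix_matrix_mult_def by (intro tendsto_intros assms)

lemma matrix_inv_cramer:
  fixes A :: "real^'n^'n"
  assumes "det A \<noteq> 0"
  shows "matrix_inv A = (\<chi> i j. det (\<chi> k l. if l = i then axis j 1 $ k else A $ k $ l) / det A)"
proof -
  have "A *v (matrix_inv A *v b) = b" for b
    using assms by (simp add: invertible_det_nz matrix_inv_mult_vector_cancel)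
  then have "matrix_inv A *v b = (\<chi> k. det (\<chi> i j. if j = k then b $ i else A $ i $ j) / det A)" for b
    using cramer[OF assms] by blast
  from this[of "axis _ 1"] show ?thesis
    by (simp add: vec_eq_iff matrix_vector_mult_basis column_def)
qed

lemma tendsto_matrix_inv:
  fixes F :: "'a \<Rightarrow> real^'n^'n"
  assumes lim: "(F \<longlongrightarrow> A) net" and inv: "invertible A"
  shows "((\<lambda>x. matrix_inv (F x)) \<longlongrightarrow> matrix_inv A) net"
proof -
  have det: "det A \<noteq> 0"
    using inv invertible_det_nz by blast
  have replace: "((\<lambda>x. \<chi> k l. if l = i then c k else F x $ k $ l) \<longlongrightarrow>
      (\<chi> k l. if l = i then c k else A $ k $ l)) net" for i and c :: "'n \<Rightarrow> real"
    using lim by (intro tendsto_vec_lambda) (auto intro!: tendsto_vec_nth)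
  have "((\<lambda>x. \<chi> i j. det (\<chi> k l. if l = i then axis j 1 $ k else F x $ k $ l) / det (F x))
      \<longlongrightarrow> matrix_inv A) net"
    unfolding matrix_inv_cramer[OF det] by (intro tendsto_intros replace lim det)
  moreover have "\<forall>\<^sub>F x in net. det (F x) \<noteq> 0"
    by (rule tendsto_imp_eventually_ne[OF tendsto_det[OF lim] det])
  ultimately show ?thesis
    by (rule Lim_transform_eventually[OF _ eventually_mono]) (simp add: matrix_inv_cramer)
qed

lemma has_vector_derivative_iff_difference_quotient:
  fixes f :: "real \<Rightarrow> 'a::real_normed_vector"
  shows "(f has_vector_derivative f') (at x within S) \<longleftrightarrow>
    ((\<lambda>y. (f y - f x) /\<^sub>R (y - x)) \<longlongrightarrow> f') (at x within S)"
proof -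
  have "norm ((1 / norm (y - x)) *\<^sub>R (f y - (f x + (y - x) *\<^sub>R f'))) =
        norm ((f y - f x) /\<^sub>R (y - x) - f')" if "y \<noteq> x" for y
  proof -
    have "(f y - f x) /\<^sub>R (y - x) - f' = (1 / (y - x)) *\<^sub>R (f y - (f x + (y - x) *\<^sub>R f'))"
      using that by (simp add: scaleR_diff_right scaleR_add_right divide_inverse)
    then show ?thesis by simp
  qed
  then have "((\<lambda>y. (1 / norm (y - x)) *\<^sub>R (f y - (f x + (y - x) *\<^sub>R f'))) \<longlongrightarrow> 0) (at x within S)
      \<longleftrightarrow> ((\<lambda>y. (f y - f x) /\<^sub>R (y - x) - f') \<longlongrightarrow> 0) (at x within S)"
    by (subst (1 2) tendsto_norm_zero_iff[symmetric])
      (intro filterlim_cong refl, auto simp: eventually_at_filter)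
  then show ?thesis
    by (simp add: has_vector_derivative_def has_derivative_within bounded_linear_scaleR_left
        Lim_null[symmetric])
qed

lemma has_vector_derivative_matrix_inv:
  fixes F :: "real \<Rightarrow> real^'n^'n"
  assumes F: "(F has_vector_derivative F') (at s within T)" and inv: "invertible (F s)"
  shows "((\<lambda>s'. matrix_inv (F s')) has_vector_derivative
           - (matrix_inv (F s) ** F' ** matrix_inv (F s))) (at s within T)"
proof -
  let ?P = "matrix_inv (F s)"
  have lim: "(F \<longlongrightarrow> F s) (at s within T)"
    using has_vector_derivative_continuous[OF F] by (simp add: continuous_within)
  have "((\<lambda>s'. - (matrix_inv (F s') ** ((F s' - F s) /\<^sub>R (s' - s)) ** ?P))
      \<longlongrightarrow> - (?P ** F' ** ?P)) (at s within T)"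
    using F unfolding has_vector_derivative_iff_difference_quotient
    by (intro tendsto_intros tendsto_matrix_inv[OF lim inv])
  moreover have "\<forall>\<^sub>F s' in at s within T. invertible (F s')"
    using tendsto_imp_eventually_ne[OF tendsto_det[OF lim]] inv by (simp add: invertible_det_nz)
  then have "\<forall>\<^sub>F s' in at s within T. - (matrix_inv (F s') ** ((F s' - F s) /\<^sub>R (s' - s)) ** ?P)
      = (matrix_inv (F s') - ?P) /\<^sub>R (s' - s)"
  proof eventually_elim
    case (elim s')
    have "matrix_inv (F s') ** (F s' - F s) ** ?P
        = (matrix_inv (F s') ** F s') ** ?P - matrix_inv (F s') ** (F s ** ?P)"
      by (simp add: matrix_diff_ldistrib matrix_diff_rdistrib matrix_mul_assoc)
    then have "matrix_inv (F s') ** (F s' - F s) ** ?P = ?P - matrix_inv (F s')"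
      using elim inv by (simp add: matrix_inv_left matrix_inv_right matrix_mul_lid matrix_mul_rid)
    moreover have "matrix_inv (F s') ** ((F s' - F s) /\<^sub>R (s' - s)) ** ?P
        = (matrix_inv (F s') ** (F s' - F s) ** ?P) /\<^sub>R (s' - s)"
      by (simp only: matrix_scalar_ac scalar_matrix_assoc[symmetric])
    ultimately show ?case
      by (simp add: scaleR_diff_right)
  qed
  ultimately show ?thesis
    unfolding has_vector_derivative_iff_difference_quotient by (rule Lim_transform_eventually)
qed

lemma has_derivative_det_mat_1: "(det has_derivative trace) (at (mat 1 :: real^'n^'n))"
proof -
  let ?P = "{p. p permutes (UNIV::'n set)}"
  let ?D = "\<lambda>(H::real^'n^'n) p. of_int (sign p) *
             (\<Sum>i\<in>UNIV. H $ i $ p i * (\<Prod>j\<in>UNIV - {i}. (mat 1 :: real^'n^'n) $ j $ p j))"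
  have "(det has_derivative (\<lambda>H. \<Sum>p\<in>?P. ?D H p)) (at (mat 1))"
    unfolding det_def[abs_def]
    by (intro derivative_eq_intros) (auto intro: has_derivative_matrix_entry)
  moreover have nonid_zero: "?D H p = 0" if "p \<in> ?P - {id}" for H p
  proof -
    have moved: "\<exists>j. j \<noteq> i \<and> p j \<noteq> j" for i
      using that by (metis (mono_tags) Diff_iff eq_id_iff mem_Collect_eq permutes_inj injD singletonI)
    have factor_0: "(\<Prod>j\<in>UNIV - {i}. (mat 1 :: real^'n^'n) $ j $ p j) = 0" for i
    proof -
      obtain j where "j \<noteq> i" "p j \<noteq> j"
        using moved by blast
      then show ?thesis
        by (intro prod_zero) (auto simp: mat_def intro!: bexI[of _ j])
    qed
    show ?thesis
      by (simp only: factor_0 mult_zero_right sum.neutral_const)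
  qed
  have "(\<Sum>p\<in>?P. ?D H p) = (\<Sum>p\<in>{id}. ?D H p)" for H
    by (rule sum.mono_neutral_right) (simp_all add: finite_permutations permutes_id nonid_zero)
  ultimately have "(det has_derivative (\<lambda>H. ?D H id)) (at (mat 1))"
    by simp
  moreover have "(\<lambda>H. ?D H id) = trace"
    by (rule ext) (simp add: sign_id mat_def trace_def)
  ultimately show ?thesis
    by simp
qed

lemma has_derivative_det:
  fixes M :: "real^'n^'n"
  assumes inv: "invertible M"
  shows "(det has_derivative (\<lambda>H. det M * trace (matrix_inv M ** H))) (at M)"
proof -
  let ?P = "matrix_inv M"
  have "linear (\<lambda>X::real^'n^'n. ?P ** X)"
    by (rule linearI) (simp_all add: matrix_add_ldistrib matrix_scalar_ac scalar_matrix_assoc)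
  then have "((\<lambda>X. ?P ** X) has_derivative (\<lambda>X. ?P ** X)) (at M)"
    by (simp add: linear_conv_bounded_linear bounded_linear_imp_has_derivative)
  moreover have "(det has_derivative trace) (at (?P ** M))"
    using has_derivative_det_mat_1 by (simp add: matrix_inv_left inv)
  ultimately have "((\<lambda>X. det M * det (?P ** X)) has_derivative (\<lambda>H. det M * trace (?P ** H))) (at M)"
    by (rule has_derivative_mult_right[OF has_derivative_compose])
  moreover have "det M * det (?P ** X) = det X" for X
    by (metis det_mul inv matrix_inv_right matrix_mul_assoc matrix_mul_lid)
  ultimately show ?thesis
    by simp
qed

lemma has_real_derivative_det:
  fixes F :: "real \<Rightarrow> real^'n^'n"
  assumes F: "(F has_vector_derivative F') (at s within T)" and inv: "invertible (F s)"
  shows "((\<lambda>s'. det (F s')) has_real_derivative det (F s) * trace (matrix_inv (F s) ** F'))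
           (at s within T)"
proof -
  have "((\<lambda>s'. det (F s')) has_derivative
         (\<lambda>h. det (F s) * trace (matrix_inv (F s) ** (h *\<^sub>R F')))) (at s within T)"
    using has_derivative_compose[OF F[unfolded has_vector_derivative_def] has_derivative_det[OF inv]]
    by (simp add: o_def)
  moreover have "(\<lambda>h. det (F s) * trace (matrix_inv (F s) ** (h *\<^sub>R F')))
      = (*) (det (F s) * trace (matrix_inv (F s) ** F'))"
    by (rule ext) (simp add: matrix_scalar_ac scalar_matrix_assoc[symmetric] trace_scaleR)
  ultimately show ?thesis
    by (simp add: has_field_derivative_def)
qed

lemma has_real_derivative_quadratic_form:
  fixes F :: "real \<Rightarrow> real^'n^'n"
  assumes "(F has_vector_derivative F') (at s within T)"
  shows "((\<lambda>s'. x \<bullet> (F s' *v x)) has_real_derivative x \<bullet> (F' *v x)) (at s within T)"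
proof -
  have "linear (\<lambda>M::real^'n^'n. x \<bullet> (M *v x))"
    by (rule linearI) (simp_all add: matrix_vector_mult_add_rdistrib inner_add_right
        scaleR_matrix_vector_assoc[symmetric])
  then have "((\<lambda>M. x \<bullet> (M *v x)) has_derivative (\<lambda>M. x \<bullet> (M *v x))) (at (F s) within F ` T)"
    by (simp add: linear_conv_bounded_linear bounded_linear_imp_has_derivative)
  from has_derivative_in_compose[OF assms[unfolded has_vector_derivative_def] this]
  have "((\<lambda>s'. x \<bullet> (F s' *v x)) has_derivative (\<lambda>h. h * (x \<bullet> (F' *v x)))) (at s within T)"
    by (simp add: o_def scaleR_matrix_vector_assoc[symmetric])
  then show ?thesis
    by (simp add: has_field_derivative_def mult.commute[of _ "x \<bullet> (F' *v x)"])
qed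

lemma gderiv_quadratic_form:
  fixes M :: "real^'n^'n"
  assumes "transpose M = M"
  shows "GDERIV (\<lambda>y. y \<bullet> (M *v y)) x :> 2 *\<^sub>R (M *v x)"
proof -
  have "((\<lambda>y. y \<bullet> (M *v y)) has_derivative (\<lambda>h. x \<bullet> (M *v h) + h \<bullet> (M *v x))) (at x)"
    by (intro has_derivative_inner has_derivative_ident has_derivative_matrix_vector_mult)
  moreover have "x \<bullet> (M *v h) + h \<bullet> (M *v x) = h \<bullet> (2 *\<^sub>R (M *v x))" for h
    using symmetric_matrix_inner[OF assms, of x h] by (simp add: inner_commute)
  ultimately show ?thesis
    by (simp add: gderiv_def)
qed

section \<open>Positive definite matrices\<close>

lemma pos_def_mat_invertible:
  assumes "pos_def_mat (S::real^'n^'n)"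
  shows "invertible S"
proof -
  have "\<forall>x. S *v x = 0 \<longrightarrow> x = 0"
    using assms unfolding pos_def_mat_def by (metis inner_zero_right less_irrefl)
  then show ?thesis
    by (simp add: invertible_left_inverse matrix_left_invertible_ker)
qed

lemma pos_def_mat_matrix_inv:
  assumes "pos_def_mat (S::real^'n^'n)"
  shows "pos_def_mat (matrix_inv S)"
  unfolding pos_def_mat_def
proof safe
  have inv: "invertible S" by (rule pos_def_mat_invertible[OF assms])
  show "transpose (matrix_inv S) = matrix_inv S"
    using assms inv transpose_matrix_inv_symmetric unfolding pos_def_mat_def by blast
  fix x :: "real^'n"
  assume "x \<noteq> 0"
  then have "matrix_inv S *v x \<noteq> 0"
    by (metis inv matrix_inv_mult_vector_cancel(2) matrix_vector_mult_0_right)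
  then have "0 < (matrix_inv S *v x) \<bullet> (S *v (matrix_inv S *v x))"
    using assms unfolding pos_def_mat_def by blast
  then show "0 < x \<bullet> (matrix_inv S *v x)"
    by (simp add: inv matrix_inv_mult_vector_cancel inner_commute)
qed

lemma pos_def_mat_det_pos:
  assumes "pos_def_mat (S::real^'n^'n)"
  shows "det S > 0"
proof (rule ccontr)
  assume "\<not> det S > 0"
  define F where "F \<tau> = (1 - \<tau>) *\<^sub>R mat 1 + \<tau> *\<^sub>R S" for \<tau> :: real
  have "continuous_on {0..1} (\<lambda>\<tau>. det (F \<tau>))"
    unfolding F_def by (intro continuous_intros)
  moreover have "det (F 1) \<le> 0" "0 \<le> det (F 0)"
    using \<open>\<not> det S > 0\<close> by (auto simp: F_def)
  ultimately obtain \<tau> where \<tau>: "0 \<le> \<tau>" "\<tau> \<le> 1" "det (F \<tau>) = 0"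
    using IVT2' by (metis zero_le_one)
  have "pos_def_mat (F \<tau>)"
    unfolding pos_def_mat_def
  proof safe
    show "transpose (F \<tau>) = F \<tau>"
      using assms unfolding pos_def_mat_def F_def by (simp add: transpose_def vec_eq_iff mat_def)
    fix x :: "real^'n"
    assume "x \<noteq> 0"
    then have "0 < x \<bullet> x" "0 < x \<bullet> (S *v x)"
      using assms unfolding pos_def_mat_def by auto
    moreover have "x \<bullet> (F \<tau> *v x) = (1 - \<tau>) * (x \<bullet> x) + \<tau> * (x \<bullet> (S *v x))"
      by (simp add: F_def scaleR_matrix_vector_assoc[symmetric] matrix_vector_mult_add_rdistrib
          inner_add_right)
    ultimately show "0 < x \<bullet> (F \<tau> *v x)"
      using \<tau> by (cases "\<tau> = 1") (auto intro: add_pos_nonneg add_nonneg_pos)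
  qed
  then show False
    using pos_def_mat_invertible \<tau>(3) invertible_det_nz by blast
qed

lemma pos_def_mat_coercive:
  assumes "pos_def_mat (S::real^'n^'n)"
  obtains l where "l > 0" and "\<And>x. l * (norm x)\<^sup>2 \<le> x \<bullet> (S *v x)"
proof -
  let ?q = "\<lambda>x::real^'n. x \<bullet> (S *v x)"
  have "continuous_on (sphere 0 1) ?q"
    by (intro continuous_intros linear_continuous_on matrix_vector_mul_bounded_linear)
  moreover have "sphere (0::real^'n) 1 \<noteq> {}"
    using norm_axis_1 by (metis mem_sphere_0 empty_iff)
  ultimately obtain x0 where x0: "x0 \<in> sphere 0 1" "\<And>y. y \<in> sphere 0 1 \<Longrightarrow> ?q x0 \<le> ?q y"
    using continuous_attains_inf[OF compact_sphere] by blast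
  have "?q x0 > 0"
    using x0(1) assms unfolding pos_def_mat_def by (metis mem_sphere_0 norm_zero zero_neq_one)
  moreover have "?q x0 * (norm x)\<^sup>2 \<le> ?q x" for x
  proof (cases "x = 0")
    case False
    then have "?q x0 \<le> ?q ((1 / norm x) *\<^sub>R x)"
      by (intro x0(2)) simp
    also have "\<dots> = ?q x / (norm x)\<^sup>2"
      by (simp add: matrix_vector_mult_scaleR power2_eq_square)
    finally show ?thesis
      using False by (simp add: field_simps)
  qed simp
  ultimately show ?thesis by (rule that)
qed

lemma gauss_density_pos:
  assumes "pos_def_mat S"
  shows "0 < gauss_density S x"
  using pos_def_mat_det_pos[OF assms] by (simp add: gauss_density_def)

lemma gauss_density_has_derivative:
  assumes "pos_def_mat S"
  shows "(gauss_density S has_derivative (\<lambda>h. - gauss_density S x * ((matrix_inv S *v x) \<bullet> h))) (at x)"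
proof -
  let ?P = "matrix_inv S"
  have "transpose ?P = ?P"
    using pos_def_mat_matrix_inv[OF assms] unfolding pos_def_mat_def by blast
  then have "((\<lambda>y. y \<bullet> (?P *v y)) has_derivative (\<lambda>h. h \<bullet> (2 *\<^sub>R (?P *v x)))) (at x)"
    using gderiv_quadratic_form unfolding gderiv_def by blast
  from has_derivative_mult_right[OF this, of "- (1 / 2)"]
  have "((\<lambda>y. - (1 / 2) * (y \<bullet> (?P *v y))) has_derivative (\<lambda>h. - ((?P *v x) \<bullet> h))) (at x)"
    by (simp add: inner_commute)
  from has_derivative_mult_right[OF DERIV_compose_FDERIV[OF DERIV_exp this],
      of "(2 * pi) powr (- real CARD('n) / 2) * det S powr (- 1 / 2)"]
  show ?thesis
    unfolding gauss_density_def[abs_def] by (simp add: mult_ac)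
qed

lemma gauss_density_has_real_derivative_param:
  fixes F :: "real \<Rightarrow> real^'n^'n"
  assumes F: "(F has_vector_derivative F') (at s within T)" and pd: "pos_def_mat (F s)"
  shows "((\<lambda>s'. gauss_density (F s') x) has_real_derivative
           gauss_density (F s) x * (((matrix_inv (F s) *v x) \<bullet> (F' *v (matrix_inv (F s) *v x))
             - trace (matrix_inv (F s) ** F')) / 2)) (at s within T)"
proof -
  define P where "P = matrix_inv (F s)"
  have inv: "invertible (F s)"
    by (rule pos_def_mat_invertible[OF pd])
  have det_pos: "0 < det (F s)"
    by (rule pos_def_mat_det_pos[OF pd])
  have P_sym: "transpose P = P"
    using pos_def_mat_matrix_inv[OF pd] unfolding pos_def_mat_def P_def by blast
  have "((\<lambda>s'. x \<bullet> (matrix_inv (F s') *v x)) has_real_derivative x \<bullet> (- (P ** F' ** P) *v x))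
      (at s within T)"
    unfolding P_def by (rule has_real_derivative_quadratic_form[OF has_vector_derivative_matrix_inv[OF F inv]])
  moreover have "x \<bullet> (- (P ** F' ** P) *v x) = - ((P *v x) \<bullet> (F' *v (P *v x)))"
    using symmetric_matrix_inner[OF P_sym, of x "F' *v (P *v x)"]
    by (simp add: matrix_vector_mult_uminus matrix_vector_mul_assoc[symmetric] inner_commute)
  ultimately have quad: "((\<lambda>s'. x \<bullet> (matrix_inv (F s') *v x)) has_real_derivative
      - ((P *v x) \<bullet> (F' *v (P *v x)))) (at s within T)"
    by simp
  have "det (F s) powr (- 1 / 2 - 1) * det (F s) powr 1 = det (F s) powr (- 1 / 2 - 1 + 1)"
    by (rule powr_add[symmetric])
  then have "- 1 / 2 * det (F s) powr (- 1 / 2 - 1) * (det (F s) * trace (P ** F'))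
      = - (det (F s) powr (- 1 / 2) * trace (P ** F')) / 2"
    using det_pos by simp
  with DERIV_chain2[OF has_real_derivative_powr[OF det_pos] has_real_derivative_det[OF F inv]]
  have "((\<lambda>s'. det (F s') powr (- 1 / 2)) has_real_derivative
      - (det (F s) powr (- 1 / 2) * trace (P ** F')) / 2) (at s within T)"
    unfolding P_def by (rule DERIV_cong)
  from DERIV_mult[OF DERIV_cmult[OF this, where c = "(2 * pi) powr (- real CARD('n) / 2)"]
      DERIV_chain2[OF DERIV_exp DERIV_cmult[OF quad, where c = "- (1 / 2)"]]]
  show ?thesis
    unfolding gauss_density_def P_def by (rule DERIV_cong) (simp add: P_def algebra_simps)
qed

lemma div_lin_scaled_matrix_plus_rank_one:
  "div_lin (\<lambda>h. a *\<^sub>R (A *v h) + (w \<bullet> h) *\<^sub>R v) = a * trace A + w \<bullet> v"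
proof -
  have "(a *\<^sub>R (A *v axis i 1) + (w \<bullet> axis i 1) *\<^sub>R v) $ i = a * A $ i $ i + w $ i * v $ i" for i
    by (simp add: matrix_vector_mult_basis column_def inner_axis)
  then show ?thesis
    by (simp add: div_lin_def trace_def inner_vec_def[of w v] sum.distrib sum_distrib_left)
qed

lemma gauss_density_has_real_derivative_lyapunov:
  fixes F :: "real \<Rightarrow> real^'n^'n"
  assumes F: "(F has_vector_derivative (F s ** transpose A + A ** F s)) (at s within T)"
    and pd: "pos_def_mat (F s)"
  shows "((\<lambda>s'. gauss_density (F s') x) has_real_derivative
           gauss_density (F s) x * ((matrix_inv (F s) *v x) \<bullet> (A *v x) - trace A)) (at s within T)"
proof -
  let ?S = "F s" and ?P = "matrix_inv (F s)"
  let ?F' = "?S ** transpose A + A ** ?S"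
  have inv: "invertible ?S"
    by (rule pos_def_mat_invertible[OF pd])
  have S_sym: "transpose ?S = ?S"
    using pd unfolding pos_def_mat_def by blast
  have SPx: "?S *v (?P *v x) = x"
    by (simp add: inv matrix_inv_mult_vector_cancel)
  have "(?P *v x) \<bullet> (?F' *v (?P *v x))
      = (?P *v x) \<bullet> (?S *v (transpose A *v (?P *v x))) + (?P *v x) \<bullet> (A *v x)"
    by (simp only: matrix_vector_mult_add_rdistrib inner_add_right matrix_vector_mul_assoc[symmetric] SPx)
  also have "(?P *v x) \<bullet> (?S *v (transpose A *v (?P *v x))) = (?P *v x) \<bullet> (A *v x)"
    using symmetric_matrix_inner[OF S_sym, of "?P *v x" "transpose A *v (?P *v x)"]
      inner_matrix_vector_transpose[of A x "?P *v x"]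
    by (simp only: SPx inner_commute)
  finally have quad: "(?P *v x) \<bullet> (?F' *v (?P *v x)) = 2 * ((?P *v x) \<bullet> (A *v x))"
    by simp
  have tr: "trace (?P ** ?F') = 2 * trace A"
    using trace_mul_sym[of "?P ** A" ?S]
    by (simp add: matrix_add_ldistrib matrix_mul_assoc matrix_inv_left matrix_inv_right inv
        matrix_mul_lid trace_add trace_transpose)
  show ?thesis
    by (rule DERIV_cong[OF gauss_density_has_real_derivative_param[OF F pd, where x = x, unfolded quad tr]])
      (simp add: field_simps)
qed

lemma gauss_density_continuity_equation:
  fixes F :: "real \<Rightarrow> real^'n^'n"
  assumes F: "(F has_vector_derivative (F s ** transpose A + A ** F s)) (at s within T)"
    and pd: "pos_def_mat (F s)"
  shows "\<exists>D L. ((\<lambda>s'. gauss_density (F s') x) has_real_derivative D) (at s within T) \<and>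
           ((\<lambda>y. gauss_density (F s) y *\<^sub>R (A *v y)) has_derivative L) (at x) \<and> D + div_lin L = 0"
proof (intro exI conjI)
  let ?P = "matrix_inv (F s)" and ?\<rho> = "gauss_density (F s) x"
  show "((\<lambda>s'. gauss_density (F s') x) has_real_derivative ?\<rho> * ((?P *v x) \<bullet> (A *v x) - trace A))
      (at s within T)"
    by (rule gauss_density_has_real_derivative_lyapunov[OF F pd])
  show "((\<lambda>y. gauss_density (F s) y *\<^sub>R (A *v y)) has_derivative
      (\<lambda>h. ?\<rho> *\<^sub>R (A *v h) + (- ?\<rho> * ((?P *v x) \<bullet> h)) *\<^sub>R (A *v x))) (at x)"
    by (rule has_derivative_scaleR[OF gauss_density_has_derivative[OF pd]
          has_derivative_matrix_vector_mult])
  show "?\<rho> * ((?P *v x) \<bullet> (A *v x) - trace A)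
      + div_lin (\<lambda>h. ?\<rho> *\<^sub>R (A *v h) + (- ?\<rho> * ((?P *v x) \<bullet> h)) *\<^sub>R (A *v x)) = 0"
    using div_lin_scaled_matrix_plus_rank_one[of ?\<rho> A "- ?\<rho> *\<^sub>R (?P *v x)" "A *v x"]
    by (simp add: inner_commute algebra_simps)
qed

section \<open>Second moments from a Gaussian moment generating function\<close>

lemma cosh_minus_quadratic_sums:
  fixes y :: real
  shows "(\<lambda>n. if even n then y ^ (n + 4) / fact (n + 4) else 0) sums (cosh y - 1 - y\<^sup>2 / 2)"
proof -
  have "(\<lambda>n. if even n then y ^ n / fact n else 0) sums cosh y"
    using cosh_converges[of y] by (simp add: divide_inverse_commute cong: if_cong)
  from sums_split_initial_segment[OF this, of 4]
  show ?thesis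
    by (simp add: lessThan_nat_numeral power2_eq_square) (simp add: algebra_simps)
qed

lemma cosh_minus_quadratic_nonneg: "0 \<le> cosh y - 1 - y\<^sup>2 / 2" for y :: real
  by (rule sums_le[OF _ sums_zero cosh_minus_quadratic_sums]) (simp add: zero_le_even_power)

lemma cosh_minus_quadratic_scale:
  fixes t y :: real
  assumes "\<bar>t\<bar> \<le> 1"
  shows "cosh (t * y) - 1 - (t * y)\<^sup>2 / 2 \<le> t ^ 4 * (cosh y - 1 - y\<^sup>2 / 2)"
proof (rule sums_le[OF _ cosh_minus_quadratic_sums sums_mult[OF cosh_minus_quadratic_sums]])
  fix n :: nat
  show "(if even n then (t * y) ^ (n + 4) / fact (n + 4) else 0)
      \<le> t ^ 4 * (if even n then y ^ (n + 4) / fact (n + 4) else 0)"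
  proof (cases "even n")
    case True
    have "t ^ n \<le> 1"
      using True assms by (metis power_even_abs power_le_one abs_ge_zero)
    moreover have "0 \<le> t ^ n" "0 \<le> y ^ (n + 4)"
      using True by (simp_all add: zero_le_even_power)
    ultimately have "t ^ n * y ^ (n + 4) \<le> y ^ (n + 4)"
      by (simp add: mult_left_le_one_le)
    then have "t ^ 4 * (t ^ n * y ^ (n + 4)) / fact (n + 4) \<le> t ^ 4 * y ^ (n + 4) / fact (n + 4)"
      by (intro divide_right_mono mult_left_mono) simp_all
    then show ?thesis
      using True by (simp add: power_mult_distrib power_add mult_ac)
  qed simp
qed

lemma cosh_moment_squeeze:
  fixes f g :: "'a \<Rightarrow> real"
  assumes [measurable]: "f \<in> borel_measurable M" "g \<in> borel_measurable M"
    and g_nonneg: "\<And>x. 0 \<le> g x"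
    and cosh_int: "\<And>\<tau>. integrable M (\<lambda>x. cosh (\<tau> * f x) * g x)"
  shows "integrable M (\<lambda>x. (f x)\<^sup>2 * g x)"
    and "0 < \<tau> \<Longrightarrow> (\<integral>x. (f x)\<^sup>2 * g x \<partial>M) / 2 \<le> (\<integral>x. (cosh (\<tau> * f x) - 1) * g x \<partial>M) / \<tau>\<^sup>2"
    and "0 < \<tau> \<Longrightarrow> \<tau> \<le> 1 \<Longrightarrow> (\<integral>x. (cosh (\<tau> * f x) - 1) * g x \<partial>M) / \<tau>\<^sup>2
           \<le> (\<integral>x. (f x)\<^sup>2 * g x \<partial>M) / 2 + \<tau>\<^sup>2 * (\<integral>x. (cosh (f x) - 1 - (f x)\<^sup>2 / 2) * g x \<partial>M)"
proof -
  define R where "R y = cosh y - 1 - y\<^sup>2 / 2" for y :: real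
  have R_nonneg: "0 \<le> R y" for y
    unfolding R_def by (rule cosh_minus_quadratic_nonneg)
  have g_int: "integrable M g"
    using cosh_int[of 0] by simp
  show sq_int: "integrable M (\<lambda>x. (f x)\<^sup>2 * g x)"
  proof (rule Bochner_Integration.integrable_bound)
    show "integrable M (\<lambda>x. 2 * (cosh (f x) * g x) - 2 * g x)"
      using cosh_int[of 1] g_int by simp
    show "AE x in M. norm ((f x)\<^sup>2 * g x) \<le> norm (2 * (cosh (f x) * g x) - 2 * g x)"
    proof (rule AE_I2)
      fix x
      have "norm ((f x)\<^sup>2 * g x) = (f x)\<^sup>2 * g x"
        using g_nonneg[of x] by simp
      also have "\<dots> \<le> (2 * cosh (f x) - 2) * g x"
        using R_nonneg[of "f x"] g_nonneg[of x] by (intro mult_right_mono) (simp_all add: R_def)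
      also have "\<dots> \<le> norm (2 * (cosh (f x) * g x) - 2 * g x)"
        by (simp add: algebra_simps abs_ge_self)
      finally show "norm ((f x)\<^sup>2 * g x) \<le> norm (2 * (cosh (f x) * g x) - 2 * g x)" .
    qed
  qed simp
  have R_eq: "R (\<tau> * f x) * g x = cosh (\<tau> * f x) * g x - g x - \<tau>\<^sup>2 / 2 * ((f x)\<^sup>2 * g x)" for \<tau> x
    by (simp add: R_def algebra_simps power_mult_distrib)
  have R_int: "integrable M (\<lambda>x. R (\<tau> * f x) * g x)" for \<tau>
    unfolding R_eq
    by (intro Bochner_Integration.integrable_diff Bochner_Integration.integrable_mult_right
        cosh_int g_int sq_int)
  have split: "(\<integral>x. (cosh (\<tau> * f x) - 1) * g x \<partial>M) / \<tau>\<^sup>2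
      = (\<integral>x. (f x)\<^sup>2 * g x \<partial>M) / 2 + (\<integral>x. R (\<tau> * f x) * g x \<partial>M) / \<tau>\<^sup>2" if "\<tau> \<noteq> 0" for \<tau>
  proof -
    have "(\<integral>x. R (\<tau> * f x) * g x \<partial>M)
        = (\<integral>x. cosh (\<tau> * f x) * g x \<partial>M) - (\<integral>x. g x \<partial>M) - \<tau>\<^sup>2 / 2 * (\<integral>x. (f x)\<^sup>2 * g x \<partial>M)"
      unfolding R_eq using cosh_int[of \<tau>] g_int sq_int by simp
    moreover have "(\<integral>x. (cosh (\<tau> * f x) - 1) * g x \<partial>M)
        = (\<integral>x. cosh (\<tau> * f x) * g x \<partial>M) - (\<integral>x. g x \<partial>M)"
      using cosh_int[of \<tau>] g_int by (simp add: left_diff_distrib)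
    ultimately show ?thesis
      using that by (simp add: field_simps)
  qed
  show "(\<integral>x. (f x)\<^sup>2 * g x \<partial>M) / 2 \<le> (\<integral>x. (cosh (\<tau> * f x) - 1) * g x \<partial>M) / \<tau>\<^sup>2" if "0 < \<tau>"
    unfolding split[OF less_imp_neq[OF that, symmetric]]
    using R_nonneg g_nonneg by (simp add: integral_nonneg_AE)
  assume "0 < \<tau>" "\<tau> \<le> 1"
  have "(\<integral>x. R (\<tau> * f x) * g x \<partial>M) \<le> (\<integral>x. \<tau> ^ 4 * (R (f x) * g x) \<partial>M)"
  proof (rule integral_mono)
    show "R (\<tau> * f x) * g x \<le> \<tau> ^ 4 * (R (f x) * g x)" for x
      using cosh_minus_quadratic_scale[of \<tau> "f x"] \<open>0 < \<tau>\<close> \<open>\<tau> \<le> 1\<close> g_nonneg[of x]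
      unfolding R_def by (simp add: mult_right_mono mult.assoc[symmetric])
  qed (use R_int[of \<tau>] R_int[of 1] in simp_all)
  then have "(\<integral>x. R (\<tau> * f x) * g x \<partial>M) / \<tau>\<^sup>2 \<le> \<tau>\<^sup>2 * (\<integral>x. R (f x) * g x \<partial>M)"
    using \<open>0 < \<tau>\<close> by (simp add: field_simps eval_nat_numeral)
  then show "(\<integral>x. (cosh (\<tau> * f x) - 1) * g x \<partial>M) / \<tau>\<^sup>2
      \<le> (\<integral>x. (f x)\<^sup>2 * g x \<partial>M) / 2 + \<tau>\<^sup>2 * (\<integral>x. (cosh (f x) - 1 - (f x)\<^sup>2 / 2) * g x \<partial>M)"
    unfolding split[OF less_imp_neq[OF \<open>0 < \<tau>\<close>, symmetric]] R_def by simp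
qed

lemma second_moment_from_gaussian_mgf:
  fixes f g :: "'a \<Rightarrow> real"
  assumes [measurable]: "f \<in> borel_measurable M" "g \<in> borel_measurable M"
    and g_nonneg: "\<And>x. 0 \<le> g x"
    and mgf_int: "\<And>\<tau>. integrable M (\<lambda>x. exp (\<tau> * f x) * g x)"
    and mgf: "\<And>\<tau>. (\<integral>x. exp (\<tau> * f x) * g x \<partial>M) = c * exp (\<tau>\<^sup>2 * \<sigma> / 2)"
  shows "integrable M (\<lambda>x. (f x)\<^sup>2 * g x)" and "(\<integral>x. (f x)\<^sup>2 * g x \<partial>M) = c * \<sigma>"
proof -
  have cosh_eq: "cosh (\<tau> * f x) * g x = (exp (\<tau> * f x) * g x + exp ((- \<tau>) * f x) * g x) / 2" for \<tau> x
    by (simp add: cosh_def field_simps)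
  have cosh_int: "integrable M (\<lambda>x. cosh (\<tau> * f x) * g x)" for \<tau>
    unfolding cosh_eq using mgf_int[of \<tau>] mgf_int[of "- \<tau>"] by simp
  show sq_int: "integrable M (\<lambda>x. (f x)\<^sup>2 * g x)"
    by (rule cosh_moment_squeeze(1)[OF assms(1-3) cosh_int])
  define M2 where "M2 = (\<integral>x. (f x)\<^sup>2 * g x \<partial>M)"
  define K where "K = (\<integral>x. (cosh (f x) - 1 - (f x)\<^sup>2 / 2) * g x \<partial>M)"
  define m where "m \<tau> = (\<integral>x. (cosh (\<tau> * f x) - 1) * g x \<partial>M) / \<tau>\<^sup>2" for \<tau> :: real
  have m_eq: "m \<tau> = c * ((exp (\<tau>\<^sup>2 * \<sigma> / 2) - 1) / \<tau>\<^sup>2)" for \<tau>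
  proof -
    have "(\<integral>x. cosh (\<tau> * f x) * g x \<partial>M) = c * exp (\<tau>\<^sup>2 * \<sigma> / 2)"
      unfolding cosh_eq using mgf_int[of \<tau>] mgf_int[of "- \<tau>"] mgf[of \<tau>] mgf[of "- \<tau>"] by simp
    moreover have "(\<integral>x. (cosh (\<tau> * f x) - 1) * g x \<partial>M)
        = (\<integral>x. cosh (\<tau> * f x) * g x \<partial>M) - (\<integral>x. g x \<partial>M)"
      using cosh_int[of \<tau>] mgf_int[of 0] by (simp add: left_diff_distrib)
    moreover have "(\<integral>x. g x \<partial>M) = c"
      using mgf[of 0] by simp
    ultimately show ?thesis
      by (simp add: m_def right_diff_distrib times_divide_eq_right)
  qed
  have m_lim: "(m \<longlongrightarrow> c * (\<sigma> / 2)) (at_right 0)"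
    unfolding m_eq[abs_def] by (intro tendsto_mult_left) real_asymp
  have ev: "\<forall>\<^sub>F \<tau> in at_right 0. 0 < \<tau> \<and> \<tau> \<le> (1::real)"
    by (auto simp: eventually_at_right_field intro!: exI[of _ 1])
  have "M2 / 2 \<le> c * (\<sigma> / 2)"
    by (rule tendsto_le[OF _ m_lim tendsto_const])
      (use ev cosh_moment_squeeze(2)[OF assms(1-3) cosh_int] in \<open>auto simp: m_def M2_def elim: eventually_mono\<close>)
  moreover have "c * (\<sigma> / 2) \<le> M2 / 2"
  proof (rule tendsto_le[OF _ _ m_lim])
    show "((\<lambda>\<tau>. M2 / 2 + \<tau>\<^sup>2 * K) \<longlongrightarrow> M2 / 2) (at_right 0)"
      by (auto intro!: tendsto_eq_intros)
  qed (use ev cosh_moment_squeeze(3)[OF assms(1-3) cosh_int] in \<open>auto simp: m_def M2_def K_def elim: eventually_mono\<close>)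
  ultimately show "(\<integral>x. (f x)\<^sup>2 * g x \<partial>M) = c * \<sigma>"
    by (simp add: M2_def)
qed

section \<open>Moments of the Gaussian density\<close>

lemma integrable_exp_neg_sq:
  assumes "(l::real) > 0"
  shows "integrable lborel (\<lambda>t::real. exp (- l * t\<^sup>2))"
proof -
  have "integrable lborel std_normal_density"
    by simp
  from lborel_integrable_real_affine[OF this, of "sqrt (2 * l)" 0]
  have "integrable lborel (\<lambda>t. std_normal_density (sqrt (2 * l) * t))"
    using assms by simp
  then have "integrable lborel (\<lambda>t. sqrt (2 * pi) * std_normal_density (sqrt (2 * l) * t))"
    by simp
  moreover have "sqrt (2 * pi) * std_normal_density (sqrt (2 * l) * t) = exp (- l * t\<^sup>2)" for t
    using assms by (simp add: std_normal_density_def power_mult_distrib)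
  ultimately show ?thesis
    by simp
qed

lemma integrable_exp_neg_norm_sq:
  assumes "(l::real) > 0"
  shows "integrable lborel (\<lambda>x::'a::euclidean_space. exp (- l * (norm x)\<^sup>2))"
proof (rule integrableI_nonneg)
  have "ennreal (exp (- l * (norm x)\<^sup>2)) = (\<Prod>b\<in>Basis. ennreal (exp (- l * (x \<bullet> b)\<^sup>2)))"
    for x :: 'a
  proof -
    have "(norm x)\<^sup>2 = (\<Sum>b\<in>Basis. (x \<bullet> b)\<^sup>2)"
      unfolding power2_norm_eq_inner by (subst euclidean_inner) (simp add: power2_eq_square)
    then show ?thesis
      by (simp add: sum_distrib_left exp_sum[symmetric] sum_negf prod_ennreal)
  qed
  then have "(\<integral>\<^sup>+x. ennreal (exp (- l * (norm (x::'a))\<^sup>2)) \<partial>lborel)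
      = (\<integral>\<^sup>+x. (\<Prod>b\<in>Basis. ennreal (exp (- l * ((x::'a) \<bullet> b)\<^sup>2))) \<partial>lborel)"
    by (simp only:)
  also have "\<dots> = (\<Prod>b\<in>(Basis::'a set). \<integral>\<^sup>+t. ennreal (exp (- l * t\<^sup>2)) \<partial>lborel)"
    by (rule nn_integral_lborel_prod) auto
  also have "\<dots> < \<infinity>"
    using integrable_exp_neg_sq[OF assms] unfolding integrable_iff_bounded
    by (simp add: power_less_top_ennreal)
  finally show "(\<integral>\<^sup>+x. ennreal (exp (- l * (norm (x::'a))\<^sup>2)) \<partial>lborel) < \<infinity>" .
qed auto

lemma lborel_translate:
  fixes f :: "'a::euclidean_space \<Rightarrow> real"
  assumes [measurable]: "f \<in> borel_measurable borel"
  shows "integrable lborel (\<lambda>x. f (c + x)) \<longleftrightarrow> integrable lborel f"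
    and "(\<integral>x. f (c + x) \<partial>lborel) = (\<integral>x. f x \<partial>lborel)"
proof -
  have [measurable]: "(+) c \<in> lborel \<rightarrow>\<^sub>M borel"
    by measurable
  show "integrable lborel (\<lambda>x. f (c + x)) \<longleftrightarrow> integrable lborel f"
    using integrable_distr_eq[of "(+) c" lborel borel f] lborel_distr_plus[of c] by simp
  show "(\<integral>x. f (c + x) \<partial>lborel) = (\<integral>x. f x \<partial>lborel)"
    using integral_distr[of "(+) c" lborel borel f] lborel_distr_plus[of c] by simp
qed

lemma borel_measurable_gauss_density [measurable]: "gauss_density S \<in> borel_measurable borel"
proof -
  have "continuous_on UNIV (\<lambda>x. x \<bullet> (matrix_inv S *v x))"
    by (intro continuous_intros linear_continuous_on matrix_vector_mul_bounded_linear)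
  then have "continuous_on UNIV (gauss_density S)"
    unfolding gauss_density_def[abs_def] by (intro continuous_intros)
  then show ?thesis
    by (rule borel_measurable_continuous_onI)
qed

lemma integrable_gauss_density:
  fixes S :: "real^'n^'n"
  assumes "pos_def_mat S"
  shows "integrable lborel (gauss_density S)"
proof -
  obtain l where l: "l > 0" "\<And>x. l * (norm x)\<^sup>2 \<le> x \<bullet> (matrix_inv S *v x)"
    using pos_def_mat_coercive[OF pos_def_mat_matrix_inv[OF assms]] by blast
  let ?c = "(2 * pi) powr (- real CARD('n) / 2) * det S powr (- 1 / 2)"
  show ?thesis
  proof (rule Bochner_Integration.integrable_bound)
    show "integrable lborel (\<lambda>x::real^'n. ?c * exp (- (l / 2) * (norm x)\<^sup>2))"
      using integrable_exp_neg_norm_sq[where 'a = "real^'n", of "l / 2"] l(1) by simp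
    show "AE x in lborel. norm (gauss_density S x) \<le> norm (?c * exp (- (l / 2) * (norm x)\<^sup>2))"
      using l(2) by (intro AE_I2) (simp add: gauss_density_def abs_mult mult_left_mono)
  qed simp
qed

lemma integral_gauss_density_pos:
  assumes "pos_def_mat S"
  shows "0 < (\<integral>x. gauss_density S x \<partial>lborel)"
proof -
  have "AE x in lborel. 0 \<le> gauss_density S x"
    using gauss_density_pos[OF assms] by (simp add: less_imp_le)
  moreover have "\<not> (AE x in lborel. gauss_density S x = 0)"
    using gauss_density_pos[OF assms] by (simp add: less_imp_neq[symmetric] ae_filter_eq_bot_iff
        trivial_limit_def[symmetric])
  ultimately show ?thesis
    using integral_nonneg_eq_0_iff_AE[OF integrable_gauss_density[OF assms]]
      integral_nonneg_AE[of "gauss_density S" lborel] by fastforce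
qed

lemma gauss_density_exp_shift:
  assumes "pos_def_mat S"
  shows "exp (\<tau> * (u \<bullet> x)) * gauss_density S x
       = exp (\<tau>\<^sup>2 * (u \<bullet> (S *v u)) / 2) * gauss_density S (- (\<tau> *\<^sub>R (S *v u)) + x)"
proof -
  let ?P = "matrix_inv S" and ?a = "\<tau> *\<^sub>R (S *v u)"
  have inv: "invertible S"
    by (rule pos_def_mat_invertible[OF assms])
  have S_sym: "transpose S = S" and P_sym: "transpose ?P = ?P"
    using assms pos_def_mat_matrix_inv[OF assms] unfolding pos_def_mat_def by blast+
  have PSu: "?P *v (S *v u) = u"
    by (simp add: inv matrix_inv_mult_vector_cancel)
  have SuPx: "(S *v u) \<bullet> (?P *v x) = u \<bullet> x"
    using symmetric_matrix_inner[OF S_sym, of u "?P *v x"] by (simp add: inv matrix_inv_mult_vector_cancel)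
  have "(x - ?a) \<bullet> (?P *v (x - ?a)) = x \<bullet> (?P *v x) - 2 * \<tau> * (u \<bullet> x) + \<tau>\<^sup>2 * (u \<bullet> (S *v u))"
    using symmetric_matrix_inner[OF P_sym, of x "S *v u"]
    by (simp add: matrix_vector_mult_diff_distrib matrix_vector_mult_scaleR inner_diff_left inner_diff_right
        PSu SuPx inner_commute power2_eq_square algebra_simps)
  then show ?thesis
    by (simp add: gauss_density_def mult_exp_exp algebra_simps)
qed

lemma gauss_density_mgf:
  assumes "pos_def_mat S"
  shows "integrable lborel (\<lambda>x. exp (\<tau> * (u \<bullet> x)) * gauss_density S x)"
    and "(\<integral>x. exp (\<tau> * (u \<bullet> x)) * gauss_density S x \<partial>lborel)
         = (\<integral>x. gauss_density S x \<partial>lborel) * exp (\<tau>\<^sup>2 * (u \<bullet> (S *v u)) / 2)"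
  using integrable_gauss_density[OF assms] lborel_translate[of "gauss_density S" "- (\<tau> *\<^sub>R (S *v u))"]
  unfolding gauss_density_exp_shift[OF assms] by simp_all

lemma gauss_density_second_moment:
  assumes "pos_def_mat S"
  shows "integrable lborel (\<lambda>x. (u \<bullet> x)\<^sup>2 * gauss_density S x)"
    and "(\<integral>x. (u \<bullet> x)\<^sup>2 * gauss_density S x \<partial>lborel)
         = (\<integral>x. gauss_density S x \<partial>lborel) * (u \<bullet> (S *v u))"
  using second_moment_from_gaussian_mgf[where f = "\<lambda>x. u \<bullet> x" and g = "gauss_density S"]
    gauss_density_pos[OF assms] gauss_density_mgf[OF assms]
  by (auto simp: less_imp_le)

lemma gauss_density_mixed_moment:
  assumes "pos_def_mat S"
  shows "integrable lborel (\<lambda>x. (u \<bullet> x) * (w \<bullet> x) * gauss_density S x)"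
    and "(\<integral>x. (u \<bullet> x) * (w \<bullet> x) * gauss_density S x \<partial>lborel)
         = (\<integral>x. gauss_density S x \<partial>lborel) * (u \<bullet> (S *v w))"
proof -
  have polar: "(u \<bullet> x) * (w \<bullet> x) * gauss_density S x
      = (((u + w) \<bullet> x)\<^sup>2 * gauss_density S x - ((u - w) \<bullet> x)\<^sup>2 * gauss_density S x) / 4" for x
    by (simp add: inner_add_left inner_diff_left power2_eq_square algebra_simps)
  show "integrable lborel (\<lambda>x. (u \<bullet> x) * (w \<bullet> x) * gauss_density S x)"
    unfolding polar using gauss_density_second_moment(1)[OF assms] by simp
  have "w \<bullet> (S *v u) = u \<bullet> (S *v w)"
    using assms symmetric_matrix_inner[of S w u] unfolding pos_def_mat_def by (simp add: inner_commute)
  then show "(\<integral>x. (u \<bullet> x) * (w \<bullet> x) * gauss_density S x \<partial>lborel)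
      = (\<integral>x. gauss_density S x \<partial>lborel) * (u \<bullet> (S *v w))"
    unfolding polar
    using gauss_density_second_moment[OF assms, where u = "u + w"]
      gauss_density_second_moment[OF assms, where u = "u - w"]
    by (simp add: matrix_vector_right_distrib matrix_vector_mult_diff_distrib inner_add_left
        inner_add_right inner_diff_left inner_diff_right algebra_simps)
qed

lemma integral_inner_gauss_density:
  fixes A B :: "real^'n^'n"
  assumes "pos_def_mat S"
  shows "(\<integral>x. ((A *v x) \<bullet> (B *v x)) * gauss_density S x \<partial>lborel)
       = (\<integral>x. gauss_density S x \<partial>lborel) * trace (S ** (transpose A ** B))"
proof -
  have S_sym: "transpose S = S"
    using assms unfolding pos_def_mat_def by blast
  have rows: "((A *v x) \<bullet> (B *v x)) * gauss_density S x
      = (\<Sum>i\<in>UNIV. (A $ i \<bullet> x) * (B $ i \<bullet> x) * gauss_density S x)" for x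
    by (simp add: inner_vec_def[of "A *v x"] matrix_vector_mul_component sum_distrib_right)
  have "(\<integral>x. ((A *v x) \<bullet> (B *v x)) * gauss_density S x \<partial>lborel)
      = (\<Sum>i\<in>UNIV. \<integral>x. (A $ i \<bullet> x) * (B $ i \<bullet> x) * gauss_density S x \<partial>lborel)"
    unfolding rows
    by (rule Bochner_Integration.integral_sum) (simp add: gauss_density_mixed_moment(1)[OF assms])
  also have "\<dots> = (\<integral>x. gauss_density S x \<partial>lborel) * (\<Sum>i\<in>UNIV. A $ i \<bullet> (S *v B $ i))"
    by (simp only: gauss_density_mixed_moment(2)[OF assms] sum_distrib_left)
  also have "(\<Sum>i\<in>UNIV. A $ i \<bullet> (S *v B $ i)) = trace (S ** (transpose A ** B))"
    by (simp only: trace_sandwich_swap[OF S_sym, of A B]) (simp only: trace_sandwich_eq_sum)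
  finally show ?thesis .
qed

section \<open>The Gaussian solution\<close>

lemma gderiv_quadratic_potential:
  fixes Sm A B :: "real^'n^'n"
  assumes sym: "transpose Sm = Sm"
    and eq: "inverse J *\<^sub>R (a *\<^sub>R A - b *\<^sub>R B) = 2 *\<^sub>R Sm"
    and k: "k \<noteq> 0"
  shows "GDERIV (\<lambda>y. y \<bullet> (Sm *v y)) x :>
           inverse (k * J) *\<^sub>R ((k * a) *\<^sub>R (A *v x) - (k * b) *\<^sub>R (B *v x))"
proof -
  have "inverse (k * J) *\<^sub>R ((k * a) *\<^sub>R (A *v x) - (k * b) *\<^sub>R (B *v x))
      = (inverse J *\<^sub>R (a *\<^sub>R A - b *\<^sub>R B)) *v x"
    using k by (simp add: matrix_vector_mult_diff_rdistrib scaleR_matrix_vector_assoc[symmetric]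
        scaleR_diff_right inverse_mult_distrib mult_ac)
  also have "\<dots> = 2 *\<^sub>R (Sm *v x)"
    by (simp add: eq scaleR_matrix_vector_assoc)
  finally show ?thesis
    using gderiv_quadratic_form[OF sym, of x] by simp
qed

lemma hamilton_jacobi_quadratic:
  fixes Ss St :: "real \<Rightarrow> real^'n^'n" and A B :: "real^'n^'n"
  assumes "\<exists>Ds Dt. (Ss has_vector_derivative Ds) (at s within T) \<and>
      (St has_vector_derivative Dt) (at t within T') \<and>
      Ds + Dt + ((1/2) * inverse J) *\<^sub>R
        (a *\<^sub>R (transpose A ** A) + b *\<^sub>R (transpose B ** B)
         - c *\<^sub>R (transpose A ** B + transpose B ** A)) = 0"
    and k: "k \<noteq> 0"
  shows "\<exists>Ds Dt. ((\<lambda>s'. x \<bullet> (Ss s' *v x)) has_real_derivative Ds) (at s within T) \<and>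
      ((\<lambda>t'. x \<bullet> (St t' *v x)) has_real_derivative Dt) (at t within T') \<and>
      Ds + Dt + inverse (k * J) *
        ((1/2) * (norm (A *v x))\<^sup>2 * (k * a) + (1/2) * (norm (B *v x))\<^sup>2 * (k * b)
         - ((B *v x) \<bullet> (A *v x)) * (k * c)) = 0"
proof -
  obtain Ds Dt where Ds: "(Ss has_vector_derivative Ds) (at s within T)"
    and Dt: "(St has_vector_derivative Dt) (at t within T')"
    and eq: "Ds + Dt + ((1/2) * inverse J) *\<^sub>R
        (a *\<^sub>R (transpose A ** A) + b *\<^sub>R (transpose B ** B)
         - c *\<^sub>R (transpose A ** B + transpose B ** A)) = 0"
    using assms(1) by blast
  have transpose_mult: "x \<bullet> ((transpose M ** N) *v x) = (M *v x) \<bullet> (N *v x)" for M N :: "real^'n^'n"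
    by (metis inner_matrix_vector_transpose matrix_vector_mul_assoc)
  have "x \<bullet> ((Ds + Dt + ((1/2) * inverse J) *\<^sub>R
      (a *\<^sub>R (transpose A ** A) + b *\<^sub>R (transpose B ** B) - c *\<^sub>R (transpose A ** B + transpose B ** A)))
      *v x) = 0"
    unfolding eq by simp
  then have "x \<bullet> (Ds *v x) + x \<bullet> (Dt *v x) + inverse J *
      ((1/2) * (norm (A *v x))\<^sup>2 * a + (1/2) * (norm (B *v x))\<^sup>2 * b - ((B *v x) \<bullet> (A *v x)) * c) = 0"
    by (simp add: matrix_vector_mult_add_rdistrib matrix_vector_mult_diff_rdistrib inner_add_right
        inner_diff_right scaleR_matrix_vector_assoc[symmetric] transpose_mult power2_norm_eq_inner
        inner_commute algebra_simps)
  moreover have "inverse (k * J) * (k * y) = inverse J * y" for y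
    using k by (simp add: field_simps)
  ultimately have "x \<bullet> (Ds *v x) + x \<bullet> (Dt *v x) + inverse (k * J) *
      ((1/2) * (norm (A *v x))\<^sup>2 * (k * a) + (1/2) * (norm (B *v x))\<^sup>2 * (k * b)
       - ((B *v x) \<bullet> (A *v x)) * (k * c)) = 0"
    by (metis (no_types, lifting) mult.left_commute right_diff_distrib distrib_left)
  with has_real_derivative_quadratic_form[OF Ds] has_real_derivative_quadratic_form[OF Dt]
  show ?thesis
    by blast
qed

theorem mainTheorem8:
  fixes Sig As At Ss St :: "real \<Rightarrow> real \<Rightarrow> real^'n^'n"
  defines "Tss \<equiv> \<lambda>s t. trace (Sig s t ** (transpose (As s t) ** As s t))"
      and "Ttt \<equiv> \<lambda>s t. trace (Sig s t ** (transpose (At s t) ** At s t))"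
      and "Tst \<equiv> \<lambda>s t. trace (Sig s t ** (transpose (As s t) ** At s t + transpose (At s t) ** As s t))"
  defines "J \<equiv> \<lambda>s t. sqrt (Tss s t * Ttt s t - ((1/2) * Tst s t)\<^sup>2)"
      and "rho \<equiv> \<lambda>s t x. gauss_density (Sig s t) x"
      and "vs \<equiv> \<lambda>s t x. As s t *v x"
      and "vt \<equiv> \<lambda>s t x. At s t *v x"
      and "Phis \<equiv> \<lambda>s t x. x \<bullet> (Ss s t *v x)"
      and "Phit \<equiv> \<lambda>s t x. x \<bullet> (St s t *v x)"
  defines "Iss \<equiv> \<lambda>s t. LINT x|lborel. (norm (vs s t x))\<^sup>2 * rho s t x"
      and "Itt \<equiv> \<lambda>s t. LINT x|lborel. (norm (vt s t x))\<^sup>2 * rho s t x"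
      and "Ist \<equiv> \<lambda>s t. LINT x|lborel. (vs s t x \<bullet> vt s t x) * rho s t x"
  defines "Aa \<equiv> \<lambda>s t. sqrt (Iss s t * Itt s t - (Ist s t)\<^sup>2)"
  assumes pd: "\<forall>s\<in>{0..1}. \<forall>t\<in>{0..1}. pos_def_mat (Sig s t)"
      and sym_s: "\<forall>s\<in>{0..1}. \<forall>t\<in>{0..1}. transpose (Ss s t) = Ss s t"
      and sym_t: "\<forall>s\<in>{0..1}. \<forall>t\<in>{0..1}. transpose (St s t) = St s t"
      and eq_s: "\<forall>s\<in>{0..1}. \<forall>t\<in>{0..1}.
        inverse (J s t) *\<^sub>R (Ttt s t *\<^sub>R As s t - ((1/2) * Tst s t) *\<^sub>R At s t) = 2 *\<^sub>R Ss s t"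
      and eq_t: "\<forall>s\<in>{0..1}. \<forall>t\<in>{0..1}.
        inverse (J s t) *\<^sub>R (Tss s t *\<^sub>R At s t - ((1/2) * Tst s t) *\<^sub>R As s t) = 2 *\<^sub>R St s t"
      and eq_S: "\<forall>s\<in>{0..1}. \<forall>t\<in>{0..1}. \<exists>Ds Dt.
        ((\<lambda>s'. Ss s' t) has_vector_derivative Ds) (at s within {0..1}) \<and>
        ((\<lambda>t'. St s t') has_vector_derivative Dt) (at t within {0..1}) \<and>
        Ds + Dt + ((1/2) * inverse (J s t)) *\<^sub>R
          (Ttt s t *\<^sub>R (transpose (As s t) ** As s t) + Tss s t *\<^sub>R (transpose (At s t) ** At s t)
           - ((1/2) * Tst s t) *\<^sub>R (transpose (As s t) ** At s t + transpose (At s t) ** As s t)) = 0"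
      and dSig_s: "\<forall>s\<in>{0..1}. \<forall>t\<in>{0..1}.
        ((\<lambda>s'. Sig s' t) has_vector_derivative (Sig s t ** transpose (As s t) + As s t ** Sig s t))
          (at s within {0..1})"
      and dSig_t: "\<forall>s\<in>{0..1}. \<forall>t\<in>{0..1}.
        ((\<lambda>t'. Sig s t') has_vector_derivative (Sig s t ** transpose (At s t) + At s t ** Sig s t))
          (at t within {0..1})"
  shows "\<forall>s\<in>{0..1}. \<forall>t\<in>{0..1}. \<forall>x::real^'n.
     (GDERIV (Phis s t) x :> inverse (Aa s t) *\<^sub>R (Itt s t *\<^sub>R vs s t x - Ist s t *\<^sub>R vt s t x)) \<and>
     (GDERIV (Phit s t) x :> inverse (Aa s t) *\<^sub>R (Iss s t *\<^sub>R vt s t x - Ist s t *\<^sub>R vs s t x)) \<and>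
     (\<exists>Ds Dt.
        ((\<lambda>s'. Phis s' t x) has_real_derivative Ds) (at s within {0..1}) \<and>
        ((\<lambda>t'. Phit s t' x) has_real_derivative Dt) (at t within {0..1}) \<and>
        Ds + Dt + inverse (Aa s t) *
          ((1/2) * (norm (vs s t x))\<^sup>2 * Itt s t + (1/2) * (norm (vt s t x))\<^sup>2 * Iss s t
           - (vt s t x \<bullet> vs s t x) * Ist s t) = 0) \<and>
     (\<exists>D L. ((\<lambda>s'. rho s' t x) has_real_derivative D) (at s within {0..1}) \<and>
        ((\<lambda>y. rho s t y *\<^sub>R vs s t y) has_derivative L) (at x) \<and> D + div_lin L = 0) \<and>
     (\<exists>D L. ((\<lambda>t'. rho s t' x) has_real_derivative D) (at t within {0..1}) \<and>
        ((\<lambda>y. rho s t y *\<^sub>R vt s t y) has_derivative L) (at x) \<and> D + div_lin L = 0)"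
proof -
  define k where "k s t = (\<integral>y. gauss_density (Sig s t) y \<partial>lborel)" for s t
  have k: "0 < k s t"
    and I: "Iss s t = k s t * Tss s t" "Itt s t = k s t * Ttt s t" "Ist s t = k s t * ((1/2) * Tst s t)"
    and Aa: "Aa s t = k s t * J s t"
    if "s \<in> {0..1}" "t \<in> {0..1}" for s t :: real
  proof -
    have pd_st: "pos_def_mat (Sig s t)"
      using pd that by blast
    show "0 < k s t"
      unfolding k_def by (rule integral_gauss_density_pos[OF pd_st])
    have moment: "(\<integral>y. ((M *v y) \<bullet> (N *v y)) * rho s t y \<partial>lborel)
        = k s t * trace (Sig s t ** (transpose M ** N))" for M N :: "real^'n^'n"
      unfolding k_def rho_def by (rule integral_inner_gauss_density[OF pd_st])
    show Iss: "Iss s t = k s t * Tss s t" and Itt: "Itt s t = k s t * Ttt s t"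
      by (simp_all add: Iss_def Itt_def Tss_def Ttt_def vs_def vt_def power2_norm_eq_inner moment)
    show Ist: "Ist s t = k s t * ((1/2) * Tst s t)"
      using trace_sandwich_swap[of "Sig s t" "As s t" "At s t"] pd_st unfolding pos_def_mat_def
      by (simp add: Ist_def Tst_def vs_def vt_def moment matrix_add_ldistrib trace_add)
    have "Iss s t * Itt s t - (Ist s t)\<^sup>2 = (k s t)\<^sup>2 * (Tss s t * Ttt s t - ((1/2) * Tst s t)\<^sup>2)"
      by (simp add: Iss Itt Ist power2_eq_square algebra_simps)
    then show "Aa s t = k s t * J s t"
      using \<open>0 < k s t\<close> by (simp add: Aa_def J_def real_sqrt_mult)
  qed
  show ?thesis
  proof (intro ballI allI conjI)
    fix s t :: real and x :: "real^'n"
    assume st: "s \<in> {0..1}" "t \<in> {0..1}"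
    have k0: "k s t \<noteq> 0"
      using k[OF st] by simp
    note defs = Phis_def Phit_def vs_def vt_def rho_def I[OF st] Aa[OF st]
    show "GDERIV (Phis s t) x :> inverse (Aa s t) *\<^sub>R (Itt s t *\<^sub>R vs s t x - Ist s t *\<^sub>R vt s t x)"
      using gderiv_quadratic_potential[OF sym_s[rule_format, OF st] eq_s[rule_format, OF st] k0]
      by (simp add: defs)
    show "GDERIV (Phit s t) x :> inverse (Aa s t) *\<^sub>R (Iss s t *\<^sub>R vt s t x - Ist s t *\<^sub>R vs s t x)"
      using gderiv_quadratic_potential[OF sym_t[rule_format, OF st] eq_t[rule_format, OF st] k0]
      by (simp add: defs)
    show "\<exists>Ds Dt.
        ((\<lambda>s'. Phis s' t x) has_real_derivative Ds) (at s within {0..1}) \<and>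
        ((\<lambda>t'. Phit s t' x) has_real_derivative Dt) (at t within {0..1}) \<and>
        Ds + Dt + inverse (Aa s t) *
          ((1/2) * (norm (vs s t x))\<^sup>2 * Itt s t + (1/2) * (norm (vt s t x))\<^sup>2 * Iss s t
           - (vt s t x \<bullet> vs s t x) * Ist s t) = 0"
      using hamilton_jacobi_quadratic[OF eq_S[rule_format, OF st] k0] by (simp add: defs)
    show "\<exists>D L. ((\<lambda>s'. rho s' t x) has_real_derivative D) (at s within {0..1}) \<and>
        ((\<lambda>y. rho s t y *\<^sub>R vs s t y) has_derivative L) (at x) \<and> D + div_lin L = 0"
      using gauss_density_continuity_equation[OF dSig_s[rule_format, OF st] pd[rule_format, OF st]]
      by (simp add: defs)
    show "\<exists>D L. ((\<lambda>t'. rho s t' x) has_real_derivative D) (at t within {0..1}) \<and>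
        ((\<lambda>y. rho s t y *\<^sub>R vt s t y) has_derivative L) (at x) \<and> D + div_lin L = 0"
      using gauss_density_continuity_equation[OF dSig_t[rule_format, OF st] pd[rule_format, OF st]]
      by (simp add: defs)
  qed
qed

end
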